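(* Let $N\geq3$. The trajectory $l_\infty$, i.e. the unique trajectory of system (S2) belonging to the unstable manifold of $Q_1=(0,0,0)$ and contained in the plane $\{x=0\}$ (with $z>0$), enters the region $\mathcal{R}=\{y>0,\ z>x\}$ and remains in it forever.
   Context: Let $m>1$, $\sigma>0$, $p>m$. System (S2) is $$\dot x=x(2-(m-1)y),\quad \dot y=-x-(N-2)y+z-my^2-\tfrac{p-m}{\sigma+2}xy,\quad \dot z=z(\sigma+2+(p-m)y).$$ For $N\ge3$, $Q_1=(0,0,0)$ is a saddle with two-dimensional unstable manifold tangent to the span of $(N,-1,0)$ and $(0,1,N+\sigma)$; the plane $\{x=0\}$ is invariant. *)

theory Defs
  imports Complex_Main "HOL-Library.Extended_Real"
begin

definition S2_sol :: "real \<Rightarrow> real \<Rightarrow> real \<Rightarrow> nat \<Rightarrow>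
    (real \<Rightarrow> real) \<Rightarrow> (real \<Rightarrow> real) \<Rightarrow> (real \<Rightarrow> real) \<Rightarrow> real set \<Rightarrow> bool" where
  "S2_sol m \<sigma> p N x y z I \<longleftrightarrow>
     (\<forall>t\<in>I.
        (x has_real_derivative x t * (2 - (m - 1) * y t)) (at t) \<and>
        (y has_real_derivative
            - x t - (real N - 2) * y t + z t - m * (y t)\<^sup>2 - (p - m) / (\<sigma> + 2) * x t * y t) (at t) \<and>
        (z has_real_derivative z t * (\<sigma> + 2 + (p - m) * y t)) (at t))"

definition S2_forward_maximal :: "real \<Rightarrow> real \<Rightarrow> real \<Rightarrow> nat \<Rightarrow>
    (real \<Rightarrow> real) \<Rightarrow> (real \<Rightarrow> real) \<Rightarrow> (real \<Rightarrow> real) \<Rightarrow> ereal \<Rightarrow> bool" where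
  "S2_forward_maximal m \<sigma> p N x y z b \<longleftrightarrow>
     S2_sol m \<sigma> p N x y z {t. ereal t < b} \<and>
     \<not> (\<exists>b' > b. \<exists>x' y' z'. S2_sol m \<sigma> p N x' y' z' {t. ereal t < b'} \<and>
           (\<forall>t. ereal t < b \<longrightarrow> x' t = x t \<and> y' t = y t \<and> z' t = z t))"

end

theory Submission
  imports Defs
begin

text \<open>In the invariant plane \<open>x = 0\<close> the equation for \<open>y\<close> decouples:
  \<open>y' = -(N-2) y + z - m y\<^sup>2\<close>. Since \<open>y \<rightarrow> 0\<close> as \<open>t \<rightarrow> -\<infinity>\<close>, near \<open>-\<infinity>\<close> the linear term
  dominates the quadratic one, so \<open>y' > 0\<close> wherever \<open>y \<le> 0\<close>; hence \<open>y\<close> cannot stay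
  nonpositive there. Once positive, \<open>y\<close> stays positive, because \<open>y' = z > 0\<close> at any zero
  of \<open>y\<close>. The inequality \<open>z > x\<close> is just \<open>z > 0 = x\<close>.\<close>

lemma pos_somewhere_below_if_deriv_pos_where_nonpos:
  fixes f :: "real \<Rightarrow> real"
  assumes lim: "(f \<longlongrightarrow> 0) at_bot"
    and deriv: "\<And>t. t \<le> T \<Longrightarrow> f t \<le> 0 \<Longrightarrow> \<exists>d. DERIV f t :> d \<and> d > 0"
  shows "\<exists>t\<le>T. f t > 0"
proof (rule ccontr)
  assume "\<not> (\<exists>t\<le>T. f t > 0)"
  then have nonpos: "\<And>t. t \<le> T \<Longrightarrow> f t \<le> 0" by force
  have "0 < f T"
    using DERIV_pos_imp_increasing_at_bot[OF _ lim] deriv nonpos by blast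
  with nonpos[of T] show False by simp
qed

lemma pos_persists_if_deriv_pos_at_zeros:
  fixes f f' :: "real \<Rightarrow> real"
  assumes "f t0 > 0" and "t0 \<le> t"
    and deriv: "\<And>s. t0 \<le> s \<Longrightarrow> s \<le> t \<Longrightarrow> (f has_real_derivative f' s) (at s)"
    and zeros: "\<And>s. t0 \<le> s \<Longrightarrow> s \<le> t \<Longrightarrow> f s = 0 \<Longrightarrow> f' s > 0"
  shows "f t > 0"
proof (rule ccontr)
  assume "\<not> f t > 0"
  have cont: "continuous_on {t0..t} f"
    using deriv by (intro continuous_at_imp_continuous_on ballI) (meson DERIV_isCont atLeastAtMost_iff)
  define Z where "Z = f -` {0} \<inter> {t0..t}"
  have "closed Z"
    unfolding Z_def using cont by (intro closed_vimage_Int) auto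
  then have "compact ({t0..t} \<inter> Z)"
    by (intro compact_Int_closed) auto
  moreover have "{t0..t} \<inter> Z = Z"
    by (auto simp: Z_def)
  ultimately have "compact Z" by simp
  moreover have "Z \<noteq> {}"
    using IVT2'[of f t 0 t0] cont \<open>\<not> f t > 0\<close> \<open>f t0 > 0\<close> \<open>t0 \<le> t\<close> by (auto simp: Z_def)
  ultimately obtain s where "s \<in> Z" and s_min: "\<And>u. u \<in> Z \<Longrightarrow> s \<le> u"
    using compact_attains_inf[of Z] by auto
  then have s: "t0 \<le> s" "s \<le> t" "f s = 0" by (auto simp: Z_def)
  with \<open>f t0 > 0\<close> have "t0 < s" by (cases "t0 = s") auto
  have pos_before: "f u > 0" if "t0 \<le> u" "u < s" for u
  proof (rule ccontr)
    assume "\<not> f u > 0"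
    have "continuous_on {t0..u} f"
      by (rule continuous_on_subset[OF cont]) (use that s in auto)
    then obtain v where "t0 \<le> v" "v \<le> u" "f v = 0"
      using IVT2'[of f u 0 t0] \<open>\<not> f u > 0\<close> \<open>f t0 > 0\<close> \<open>t0 \<le> u\<close> by force
    then have "v \<in> Z" using that s by (auto simp: Z_def)
    with s_min \<open>v \<le> u\<close> \<open>u < s\<close> show False by fastforce
  qed
  obtain d where "d > 0" and decr: "\<And>h. h > 0 \<Longrightarrow> h < d \<Longrightarrow> f (s - h) < f s"
    using DERIV_pos_inc_left[OF deriv zeros] s by blast
  define h where "h = min d (s - t0) / 2"
  have "h > 0" "h < d" "t0 \<le> s - h"
    using \<open>d > 0\<close> \<open>t0 < s\<close> by (auto simp: h_def min_def field_simps)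
  with pos_before[of "s - h"] decr[of h] s show False by simp
qed

text \<open>Maximality excludes \<open>b = -\<infinity>\<close>: the empty solution is extended by the zero solution.\<close>

lemma S2_forward_maximal_domain_nonempty:
  assumes "S2_forward_maximal m \<sigma> p N x y z b"
  obtains t where "ereal t < b"
proof -
  have "b \<noteq> -\<infinity>"
  proof
    assume "b = -\<infinity>"
    moreover have "S2_sol m \<sigma> p N (\<lambda>_. 0) (\<lambda>_. 0) (\<lambda>_. 0) {t. ereal t < \<infinity>}"
      unfolding S2_sol_def by (simp add: power2_eq_square)
    moreover have "b < \<infinity>" and "\<forall>t. ereal t < b \<longrightarrow> (0::real) = x t \<and> 0 = y t \<and> 0 = z t"
      using \<open>b = -\<infinity>\<close> by simp_all
    ultimately show False
      using assms unfolding S2_forward_maximal_def by blast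
  qed
  then show thesis
    using that by (cases b) (auto intro: that[of "real_of_ereal b - 1"] that[of 0])
qed

lemma S2_sol_in_plane_y_deriv:
  assumes "S2_sol m \<sigma> p N x y z I" and "t \<in> I" and "x t = 0"
  shows "(y has_real_derivative - (real N - 2) * y t + z t - m * (y t)\<^sup>2) (at t)"
proof -
  have "(y has_real_derivative
      - x t - (real N - 2) * y t + z t - m * (y t)\<^sup>2 - (p - m) / (\<sigma> + 2) * x t * y t) (at t)"
    using assms(1,2) unfolding S2_sol_def by blast
  then show ?thesis using \<open>x t = 0\<close> by (simp add: algebra_simps)
qed

lemma plane_y_rate_pos:
  fixes m n y z :: real
  assumes "m > 0" and "y \<le> 0" and "\<bar>y\<bar> < n / m" and "z > 0"
  shows "- n * y + z - m * y\<^sup>2 > 0"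
proof -
  have "n + m * y > 0"
    using assms by (simp add: field_simps)
  then have "- y * (n + m * y) \<ge> 0"
    using \<open>y \<le> 0\<close> by (simp add: mult_nonpos_nonneg)
  with \<open>z > 0\<close> show ?thesis by (simp add: algebra_simps power2_eq_square)
qed

lemma plane_y_pos_somewhere_below:
  fixes y z :: "real \<Rightarrow> real"
  assumes "m > 0" and "n > 0" and ylim: "(y \<longlongrightarrow> 0) at_bot"
    and deriv: "\<And>t. t \<le> T \<Longrightarrow> (y has_real_derivative - n * y t + z t - m * (y t)\<^sup>2) (at t)"
    and zpos: "\<And>t. t \<le> T \<Longrightarrow> z t > 0"
  shows "\<exists>t\<le>T. y t > 0"
proof -
  obtain T1 where small: "\<And>t. t \<le> T1 \<Longrightarrow> \<bar>y t\<bar> < n / m"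
    using tendstoD[OF ylim, of "n / m"] assms(1,2) by (auto simp: eventually_at_bot_linorder)
  have "\<exists>d. DERIV y t :> d \<and> d > 0" if "t \<le> min T T1" "y t \<le> 0" for t
  proof -
    have "- n * y t + z t - m * (y t)\<^sup>2 > 0"
      using plane_y_rate_pos[OF \<open>m > 0\<close> \<open>y t \<le> 0\<close> small zpos] that by simp
    moreover have "t \<le> T" using that by simp
    ultimately show ?thesis using deriv by blast
  qed
  then obtain t where "t \<le> min T T1" "y t > 0"
    using pos_somewhere_below_if_deriv_pos_where_nonpos[OF ylim] by blast
  then show ?thesis by auto
qed

theorem lemma3p2:
  fixes m \<sigma> p :: real and N :: nat
    and x y z :: "real \<Rightarrow> real" and b :: ereal
  assumes "m > 1" and "\<sigma> > 0" and "p > m" and "N \<ge> 3"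
    and sol: "S2_forward_maximal m \<sigma> p N x y z b"
    and unstable: "((\<lambda>t. (x t, y t, z t)) \<longlongrightarrow> (0, 0, 0)) at_bot"
    and plane: "\<forall>t. ereal t < b \<longrightarrow> x t = 0"
    and zpos: "\<forall>t. ereal t < b \<longrightarrow> z t > 0"
  shows "\<exists>t0. ereal t0 < b \<and> (\<forall>t. t0 \<le> t \<and> ereal t < b \<longrightarrow> y t > 0 \<and> z t > x t)"
proof -
  have "S2_sol m \<sigma> p N x y z {t. ereal t < b}"
    using sol unfolding S2_forward_maximal_def by blast
  then have deriv: "(y has_real_derivative - (real N - 2) * y t + z t - m * (y t)\<^sup>2) (at t)"
    if "ereal t < b" for t
    using S2_sol_in_plane_y_deriv plane that by blast
  have ylim: "(y \<longlongrightarrow> 0) at_bot"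
    using tendsto_fst[OF tendsto_snd[OF unstable]] by simp
  have below_b: "ereal s < b" if "s \<le> t" "ereal t < b" for s t
    using that by (meson ereal_less_eq(3) le_less_trans)
  obtain T where "ereal T < b"
    using sol by (rule S2_forward_maximal_domain_nonempty)
  then obtain t0 where "t0 \<le> T" and "y t0 > 0"
    using plane_y_pos_somewhere_below[OF _ _ ylim, of m "real N - 2" T z]
      deriv zpos below_b \<open>m > 1\<close> \<open>N \<ge> 3\<close> by auto
  moreover have "y t > 0" if "t0 \<le> t" "ereal t < b" for t
    using pos_persists_if_deriv_pos_at_zeros[OF \<open>y t0 > 0\<close> \<open>t0 \<le> t\<close> deriv] zpos below_b that
    by simp
  ultimately show ?thesis
    using \<open>ereal T < b\<close> below_b plane zpos by (intro exI[of _ t0]) auto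
qed

end
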